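(* Assume that $R,\dot R,\ddot R,\dddot R$ satisfy the bicolored tetrahedron equations (BTE) for every $\sigma\in\mathbb{Z}/2\mathbb{Z}$ and all spectral parameters, and that $\dddot R^{[\sigma]}(r_1,r_2,r_3)$ is invertible for every $\sigma$ and all $r_1,r_2,r_3\in C$. Fix $L\ge 1$ and planes $1_1<\dots<1_{2L}$ with arbitrary parameters $r_{1_l}\in C$, and let $2<3<4$ be three further planes, all larger than every $1_l$, with arbitrary parameters $r_2,r_3,r_4\in C$. Then for every $\sigma\in\mathbb{Z}/2\mathbb{Z}$ the trace reductions satisfy the bicolored Yang--Baxter equation $$\mathbf{R}^{[\sigma]}_{23}\,\dot{\mathbf{R}}^{[\sigma+1]}_{24}\,\ddot{\mathbf{R}}^{[\sigma]}_{34}=\ddot{\mathbf{R}}^{[\sigma+1]}_{34}\,\dot{\mathbf{R}}^{[\sigma]}_{24}\,\mathbf{R}^{[\sigma+1]}_{23}$$ as operators on $\bigotimes_{l}\bigl(V_{(1_l2)}\otimes V_{(1_l3)}\otimes V_{(1_l4)}\bigr)$.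
   Context: Let $V$ be a finite-dimensional complex vector space and $C$ a set (of spectral parameters). Let $R,\dot R,\ddot R,\dddot R:\mathbb{Z}/2\mathbb{Z}\times C^3\to\mathrm{End}(V\otimes V\otimes V)$ be maps; write $X^{[\sigma]}(r_1,r_2,r_3)$ for the value of $X\in\{R,\dot R,\ddot R,\dddot R\}$ at $(\sigma,r_1,r_2,r_3)$. Superscript colors $[\sigma]$ are always read modulo 2. Notation: consider a finite totally ordered set of "planes", each plane $\alpha$ carrying a parameter $r_\alpha\in C$. For each pair $\alpha<\beta$ let $V_{(\alpha\beta)}$ be a copy of $V$. For $\alpha<\beta<\gamma$, $X^{[\sigma]}_{(\alpha\beta\gamma)}$ denotes the operator on the tensor product of all the spaces $V_{(\cdot\cdot)}$ under consideration that acts as $X^{[\sigma]}(r_\alpha,r_\beta,r_\gamma)$ on $V_{(\alpha\beta)}\otimes V_{(\alpha\gamma)}\otimes V_{(\beta\gamma)}$ (in this order) and as the identity on all other factors. Bicolored tetrahedron equations (BTE$[\sigma]$): for any four planes $1<2<3<4$ with arbitrary parameters $r_1,r_2,r_3,r_4\in C$, on $V_{(12)}\otimes V_{(13)}\otimes V_{(14)}\otimes V_{(23)}\otimes V_{(24)}\otimes V_{(34)}$, $$R^{[\sigma]}_{(123)}\dot R^{[\sigma+1]}_{(124)}\ddot R^{[\sigma]}_{(134)}\dddot R^{[\sigma+1]}_{(234)}=\dddot R^{[\sigma]}_{(234)}\ddot R^{[\sigma+1]}_{(134)}\dot R^{[\sigma]}_{(124)}R^{[\sigma+1]}_{(123)}.$$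 Trace reduction: given planes $1_1<\dots<1_{2L}$ and planes $\alpha<\beta$ larger than all $1_l$, define $$\mathbf{R}^{[\sigma]}_{\alpha\beta}:=\mathrm{Tr}_{V_{(\alpha\beta)}}\Bigl(R^{[\sigma+1]}_{(1_1\alpha\beta)}R^{[\sigma+2]}_{(1_2\alpha\beta)}\cdots R^{[\sigma+2L]}_{(1_{2L}\alpha\beta)}\Bigr),$$ the partial trace over the factor $V_{(\alpha\beta)}$, an operator on $\bigotimes_l\bigl(V_{(1_l\alpha)}\otimes V_{(1_l\beta)}\bigr)$ (extended by the identity to other factors). $\dot{\mathbf R}$, $\ddot{\mathbf R}$ are defined in the same way with $R$ replaced by $\dot R$, $\ddot R$. *)

theory Defs
  imports Complex_Main
begin

text \<open>
  V is identified with C^d via a basis (indices 0..<d).  Planes are natural numbers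
  (with their natural order); the factor V_(alpha beta) is labelled by the pair (alpha, beta).
  A basis state of a tensor product over a finite set S of labels is a configuration
  c :: label => nat with c x < d on S and c x = 0 off S.  Operators are given by their
  matrix entries A out in.  Colours Z/2Z are represented by bool (True = 1).
\<close>

type_synonym label = "nat \<times> nat"
type_synonym cfg = "label \<Rightarrow> nat"
type_synonym op = "cfg \<Rightarrow> cfg \<Rightarrow> complex"
type_synonym mat3 = "(nat \<times> nat \<times> nat) \<Rightarrow> (nat \<times> nat \<times> nat) \<Rightarrow> complex"

text \<open>colour sigma + k in Z/2Z\<close>
definition col :: "bool \<Rightarrow> nat \<Rightarrow> bool" where
  "col \<sigma> k = (\<sigma> \<noteq> odd k)"

definition valid :: "nat \<Rightarrow> label set \<Rightarrow> cfg \<Rightarrow> bool" where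
  "valid d S c \<longleftrightarrow> (\<forall>x. (x \<in> S \<longrightarrow> c x < d) \<and> (x \<notin> S \<longrightarrow> c x = 0))"

definition cfgs :: "nat \<Rightarrow> label set \<Rightarrow> cfg set" where
  "cfgs d S = {c. valid d S c}"

definition op_mult :: "nat \<Rightarrow> label set \<Rightarrow> op \<Rightarrow> op \<Rightarrow> op" where
  "op_mult d S A B = (\<lambda>u i. \<Sum>e\<in>cfgs d S. A u e * B e i)"

definition op_id :: op where
  "op_id = (\<lambda>u i. if u = i then 1 else 0)"

definition op_prod :: "nat \<Rightarrow> label set \<Rightarrow> op list \<Rightarrow> op" where
  "op_prod d S As = foldr (op_mult d S) As op_id"

definition op_eq :: "nat \<Rightarrow> label set \<Rightarrow> op \<Rightarrow> op \<Rightarrow> bool" where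
  "op_eq d S A B \<longleftrightarrow> (\<forall>u i. valid d S u \<longrightarrow> valid d S i \<longrightarrow> A u i = B u i)"

definition loc :: "label set \<Rightarrow> label \<Rightarrow> label \<Rightarrow> label \<Rightarrow> mat3 \<Rightarrow> op" where
  "loc S a b c X = (\<lambda>u i. X (u a, u b, u c) (i a, i b, i c) *
       (if \<forall>x \<in> S - {a, b, c}. u x = i x then 1 else 0))"

definition Xop :: "label set \<Rightarrow> (nat \<Rightarrow> 'c) \<Rightarrow> (bool \<Rightarrow> 'c \<Rightarrow> 'c \<Rightarrow> 'c \<Rightarrow> mat3)
     \<Rightarrow> bool \<Rightarrow> nat \<Rightarrow> nat \<Rightarrow> nat \<Rightarrow> op" where
  "Xop S r X \<sigma> \<alpha> \<beta> \<gamma> = loc S (\<alpha>, \<beta>) (\<alpha>, \<gamma>) (\<beta>, \<gamma>) (X \<sigma> (r \<alpha>) (r \<beta>) (r \<gamma>))"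

definition six_space :: "nat \<Rightarrow> nat \<Rightarrow> nat \<Rightarrow> nat \<Rightarrow> label set" where
  "six_space a b c e = {(a,b), (a,c), (a,e), (b,c), (b,e), (c,e)}"

definition BTE :: "nat \<Rightarrow> (bool \<Rightarrow> 'c \<Rightarrow> 'c \<Rightarrow> 'c \<Rightarrow> mat3) \<Rightarrow> (bool \<Rightarrow> 'c \<Rightarrow> 'c \<Rightarrow> 'c \<Rightarrow> mat3)
     \<Rightarrow> (bool \<Rightarrow> 'c \<Rightarrow> 'c \<Rightarrow> 'c \<Rightarrow> mat3) \<Rightarrow> (bool \<Rightarrow> 'c \<Rightarrow> 'c \<Rightarrow> 'c \<Rightarrow> mat3) \<Rightarrow> bool \<Rightarrow> bool" where
  "BTE d R R1 R2 R3 \<sigma> \<longleftrightarrow>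
     (\<forall>(r :: nat \<Rightarrow> 'c) a b c e. a < b \<longrightarrow> b < c \<longrightarrow> c < e \<longrightarrow>
        (let S = six_space a b c e in
         op_eq d S
           (op_prod d S [Xop S r R \<sigma> a b c, Xop S r R1 (col \<sigma> 1) a b e,
                         Xop S r R2 \<sigma> a c e, Xop S r R3 (col \<sigma> 1) b c e])
           (op_prod d S [Xop S r R3 \<sigma> b c e, Xop S r R2 (col \<sigma> 1) a c e,
                         Xop S r R1 \<sigma> a b e, Xop S r R (col \<sigma> 1) a b c])))"

definition idx3 :: "nat \<Rightarrow> (nat \<times> nat \<times> nat) set" where
  "idx3 d = {(i, j, k). i < d \<and> j < d \<and> k < d}"

definition invertible3 :: "nat \<Rightarrow> mat3 \<Rightarrow> bool" where
  "invertible3 d X \<longleftrightarrow> (\<exists>Y. \<forall>u \<in> idx3 d. \<forall>w \<in> idx3 d.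
      (\<Sum>v \<in> idx3 d. X u v * Y v w) = (if u = w then 1 else 0) \<and>
      (\<Sum>v \<in> idx3 d. Y u v * X v w) = (if u = w then 1 else 0))"

definition restr :: "label set \<Rightarrow> cfg \<Rightarrow> cfg" where
  "restr T c = (\<lambda>x. if x \<in> T then c x else 0)"

definition ptrace :: "nat \<Rightarrow> label \<Rightarrow> op \<Rightarrow> op" where
  "ptrace d t A = (\<lambda>u i. \<Sum>k<d. A (u(t := k)) (i(t := k)))"

definition extend :: "label set \<Rightarrow> label set \<Rightarrow> op \<Rightarrow> op" where
  "extend S T A = (\<lambda>u i. A (restr T u) (restr T i) * (if \<forall>x \<in> S - T. u x = i x then 1 else 0))"

definition tr_space :: "nat list \<Rightarrow> nat \<Rightarrow> nat \<Rightarrow> label set" where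
  "tr_space ps \<alpha> \<beta> = (\<Union>p \<in> set ps. {(p, \<alpha>), (p, \<beta>)}) \<union> {(\<alpha>, \<beta>)}"

definition trace_red :: "nat \<Rightarrow> label set \<Rightarrow> nat list \<Rightarrow> (nat \<Rightarrow> 'c)
     \<Rightarrow> (bool \<Rightarrow> 'c \<Rightarrow> 'c \<Rightarrow> 'c \<Rightarrow> mat3) \<Rightarrow> bool \<Rightarrow> nat \<Rightarrow> nat \<Rightarrow> op" where
  "trace_red d Sfull ps r X \<sigma> \<alpha> \<beta> =
     (let S = tr_space ps \<alpha> \<beta> in
      extend Sfull (S - {(\<alpha>, \<beta>)})
        (ptrace d (\<alpha>, \<beta>)
          (op_prod d S (map (\<lambda>l. Xop S r X (col \<sigma> (Suc l)) (ps ! l) \<alpha> \<beta>) [0..<length ps]))))"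

definition yb_space :: "nat list \<Rightarrow> nat \<Rightarrow> nat \<Rightarrow> nat \<Rightarrow> label set" where
  "yb_space ps b c e = (\<Union>p \<in> set ps. {(p, b), (p, c), (p, e)})"

end

theory Submission
  imports Defs "HOL-Library.Function_Algebras"
begin

text \<open>
  Write M for the monodromy of one of the operators on the full space, so that a trace reduction
  is the partial trace of M over its auxiliary factor V_(ab). Each side of the claimed identity is
  then the partial trace, over the three auxiliary factors V_(23), V_(24), V_(34), of a product of
  three monodromies. Factors on different planes 1_l act on disjoint tensor factors and commute, so
  this product regroups into layers, the l-th layer being the three factors on plane 1_l. The
  tetrahedron equation for the planes 1_l < 2 < 3 < 4 carries R3_(234) through the l-th layer,
  turning it into the l-th layer of the other side and shifting the colour of R3 by one. After the
  even number 2L of layers the colour is back, so one product is the conjugate of the other by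
  R3_(234), which acts only on the auxiliary factors; cyclicity of the partial trace removes it.
\<close>

section \<open>Ordered products\<close>

text \<open>The multiplication is total and always lands in \<open>A\<close>, but it is unital only on \<open>A\<close>.\<close>

locale monoid_on = semigroup +
  fixes z :: 'a (\<open>\<^bold>1\<close>) and A :: "'a set"
  assumes closed: "a \<^bold>* b \<in> A" and neutral_in: "\<^bold>1 \<in> A"
    and left_neutral: "a \<in> A \<Longrightarrow> \<^bold>1 \<^bold>* a = a"
    and right_neutral: "a \<in> A \<Longrightarrow> a \<^bold>* \<^bold>1 = a"
begin

definition listprod :: "'a list \<Rightarrow> 'a" where
  "listprod xs = foldr (\<^bold>*) xs \<^bold>1"

lemma listprod_Nil [simp]: "listprod [] = \<^bold>1"
  by (simp add: listprod_def)

lemma listprod_Cons [simp]: "listprod (x # xs) = x \<^bold>* listprod xs"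
  by (simp add: listprod_def)

lemma listprod_in: "listprod xs \<in> A"
  by (cases xs) (simp_all add: closed neutral_in)

lemma listprod_append: "listprod (xs @ ys) = listprod xs \<^bold>* listprod ys"
  by (induction xs) (simp_all add: left_neutral listprod_in assoc)

lemma listprod_snoc: "x \<in> A \<Longrightarrow> listprod (xs @ [x]) = listprod xs \<^bold>* x"
  by (simp add: listprod_append right_neutral)

lemma commute_imp_left_commute: "x \<^bold>* y = y \<^bold>* x \<Longrightarrow> x \<^bold>* (y \<^bold>* w) = y \<^bold>* (x \<^bold>* w)"
  by (metis assoc)

lemma listprod_commute:
  assumes "x \<in> A" and "\<And>y. y \<in> set ys \<Longrightarrow> y \<^bold>* x = x \<^bold>* y"
  shows "listprod ys \<^bold>* x = x \<^bold>* listprod ys"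
  using assms(2)
proof (induction ys)
  case Nil
  show ?case using assms(1) by (simp add: left_neutral right_neutral)
next
  case (Cons y ys)
  then show ?case by (metis assoc list.set_intros listprod_Cons)
qed

lemma listprod_interleave:
  assumes in_A: "\<And>l. a l \<in> A" "\<And>l. b l \<in> A" "\<And>l. c l \<in> A"
    and comm: "\<And>l m. m < l \<Longrightarrow> l < n \<Longrightarrow>
      b m \<^bold>* a l = a l \<^bold>* b m \<and> c m \<^bold>* a l = a l \<^bold>* c m \<and> c m \<^bold>* b l = b l \<^bold>* c m"
  shows "listprod (map (\<lambda>l. a l \<^bold>* b l \<^bold>* c l) [0..<n]) =
    listprod (map a [0..<n]) \<^bold>* listprod (map b [0..<n]) \<^bold>* listprod (map c [0..<n])"
  using comm
proof (induction n)
  case 0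
  show ?case by (simp add: left_neutral neutral_in)
next
  case (Suc n)
  let ?a = "listprod (map a [0..<n])" and ?b = "listprod (map b [0..<n])"
    and ?c = "listprod (map c [0..<n])"
  have ca: "?c \<^bold>* a n = a n \<^bold>* ?c" and ba: "?b \<^bold>* a n = a n \<^bold>* ?b"
    and cb: "?c \<^bold>* b n = b n \<^bold>* ?c"
    by (rule listprod_commute; use in_A Suc.prems in auto)+
  have "listprod (map (\<lambda>l. a l \<^bold>* b l \<^bold>* c l) [0..<Suc n]) =
      ?a \<^bold>* ?b \<^bold>* ?c \<^bold>* (a n \<^bold>* b n \<^bold>* c n)"
    using Suc by (simp add: listprod_snoc closed)
  also have "\<dots> = ?a \<^bold>* a n \<^bold>* (?b \<^bold>* b n) \<^bold>* (?c \<^bold>* c n)"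
    by (simp only: assoc commute_imp_left_commute[OF ca] commute_imp_left_commute[OF ba]
        commute_imp_left_commute[OF cb])
  also have "\<dots> = listprod (map a [0..<Suc n]) \<^bold>* listprod (map b [0..<Suc n]) \<^bold>*
      listprod (map c [0..<Suc n])"
    by (simp add: listprod_snoc in_A)
  finally show ?case .
qed

lemma listprod_telescope:
  assumes in_A: "\<And>j. a j \<in> A" "\<And>j. b j \<in> A" "\<And>j. q j \<in> A"
    and step: "\<And>j. j < n \<Longrightarrow> a j \<^bold>* q (Suc j) = q j \<^bold>* b j"
  shows "listprod (map a [0..<n]) \<^bold>* q n = q 0 \<^bold>* listprod (map b [0..<n])"
  using step
proof (induction n)
  case 0
  show ?case using in_A by (simp add: left_neutral right_neutral)
next
  case (Suc n)
  have "listprod (map a [0..<Suc n]) \<^bold>* q (Suc n) = listprod (map a [0..<n]) \<^bold>* (q n \<^bold>* b n)"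
    using Suc.prems by (simp add: listprod_snoc in_A assoc)
  also have "\<dots> = q 0 \<^bold>* listprod (map b [0..<Suc n])"
    using Suc by (simp add: listprod_snoc in_A flip: assoc)
  finally show ?case .
qed

lemma conj_invariant_telescope:
  assumes in_A: "\<And>j. a j \<in> A" "\<And>j. b j \<in> A" "\<And>j. q j \<in> A"
    and step: "\<And>j. j < n \<Longrightarrow> a j \<^bold>* q (Suc j) = q j \<^bold>* b j"
    and closed_chain: "q n = q 0"
    and inverse: "q 0 \<^bold>* p = \<^bold>1" "p \<^bold>* q 0 = \<^bold>1"
    and invariant: "\<And>x. x \<in> A \<Longrightarrow> \<tau> (x \<^bold>* p) = \<tau> (p \<^bold>* x)"
  shows "\<tau> (listprod (map a [0..<n])) = \<tau> (listprod (map b [0..<n]))"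
proof -
  have "listprod (map a [0..<n]) = q 0 \<^bold>* listprod (map b [0..<n]) \<^bold>* p"
    using listprod_telescope[of a b q n, OF in_A step] closed_chain inverse
    by (metis assoc listprod_in right_neutral)
  then have "\<tau> (listprod (map a [0..<n])) = \<tau> (p \<^bold>* q 0 \<^bold>* listprod (map b [0..<n]))"
    using invariant[OF closed, of "q 0" "listprod (map b [0..<n])"] by (simp add: assoc)
  then show ?thesis
    by (simp add: inverse left_neutral listprod_in)
qed

end

section \<open>Configurations\<close>

text \<open>Configurations are added pointwise (\<^theory>\<open>HOL-Library.Function_Algebras\<close>); for
  configurations with disjoint supports, \<open>a + b\<close> is the configuration that is \<open>a\<close> on the support
  of \<open>a\<close> and \<open>b\<close> on that of \<open>b\<close>.\<close>

lemma mem_cfgs [simp]: "c \<in> cfgs d S \<longleftrightarrow> valid d S c"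
  by (simp add: cfgs_def)

lemma finite_cfgs: "finite S \<Longrightarrow> finite (cfgs d S)"
proof -
  assume "finite S"
  have "cfgs d S \<subseteq> {c. \<forall>x. (x \<in> S \<longrightarrow> c x \<in> {..<d}) \<and> (x \<notin> S \<longrightarrow> c x = 0)}"
    by (auto simp: cfgs_def valid_def)
  then show ?thesis
    using finite_set_of_finite_funs[OF \<open>finite S\<close> finite_lessThan] finite_subset by blast
qed

lemma validI: "(\<And>x. x \<in> S \<Longrightarrow> c x < d) \<Longrightarrow> (\<And>x. x \<notin> S \<Longrightarrow> c x = 0) \<Longrightarrow> valid d S c"
  unfolding valid_def by blast

lemma valid_less: "valid d S c \<Longrightarrow> x \<in> S \<Longrightarrow> c x < d"
  unfolding valid_def by blast

lemma valid_zero: "valid d S c \<Longrightarrow> x \<notin> S \<Longrightarrow> c x = 0"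
  unfolding valid_def by blast

lemma valid_eqI: "valid d S u \<Longrightarrow> valid d S v \<Longrightarrow> (\<And>x. x \<in> S \<Longrightarrow> u x = v x) \<Longrightarrow> u = v"
  unfolding valid_def by (metis ext)

lemma valid_restr: "valid d S u \<Longrightarrow> T \<subseteq> S \<Longrightarrow> valid d T (restr T u)"
  unfolding valid_def restr_def by auto

lemma valid_add: "valid d A a \<Longrightarrow> valid d B b \<Longrightarrow> A \<inter> B = {} \<Longrightarrow> valid d (A \<union> B) (a + b)"
  unfolding valid_def by (metis Un_iff add_0 add.right_neutral disjoint_iff plus_fun_apply)

lemma restr_valid_eq: "valid d S u \<Longrightarrow> restr S u = u"
  by (auto simp: restr_def fun_eq_iff valid_zero)

lemma restr_eq_iff: "restr T u = restr T i \<longleftrightarrow> (\<forall>x\<in>T. u x = i x)"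
  by (auto simp: restr_def fun_eq_iff)

lemma restr_add: "valid d A a \<Longrightarrow> valid d B b \<Longrightarrow> A \<inter> B = {} \<Longrightarrow> restr A (a + b) = a"
  unfolding valid_def restr_def by (auto simp: disjoint_iff)

lemma restr_add_restr: "valid d (A \<union> B) c \<Longrightarrow> A \<inter> B = {} \<Longrightarrow> restr A c + restr B c = c"
  unfolding valid_def restr_def by (auto simp: disjoint_iff)

lemma sum_cfgs_Un:
  assumes "A \<inter> B = {}"
  shows "sum f (cfgs d (A \<union> B)) = (\<Sum>a\<in>cfgs d A. \<Sum>b\<in>cfgs d B. f (a + b))"
proof -
  have "(\<Sum>(a, b)\<in>cfgs d A \<times> cfgs d B. f (a + b)) = sum f (cfgs d (A \<union> B))"
  proof (rule sum.reindex_bij_witness[where j = "\<lambda>(a, b). a + b"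
        and i = "\<lambda>c. (restr A c, restr B c)"])
    fix ab assume "ab \<in> cfgs d A \<times> cfgs d B"
    then obtain a b where ab: "ab = (a, b)" "valid d A a" "valid d B b"
      by (auto simp: cfgs_def)
    have "restr B (a + b) = b"
      using restr_add[OF ab(3,2)] assms by (simp add: add.commute Int_commute)
    then show "(restr A ((\<lambda>(a, b). a + b) ab), restr B ((\<lambda>(a, b). a + b) ab)) = ab"
      using restr_add[OF ab(2,3) assms] ab(1) by simp
    show "(\<lambda>(a, b). a + b) ab \<in> cfgs d (A \<union> B)"
      using valid_add[OF ab(2,3) assms] ab(1) by (simp add: cfgs_def)
  qed (use assms valid_restr restr_add_restr in \<open>auto simp: cfgs_def\<close>)
  then show ?thesis
    by (simp add: sum.cartesian_product)
qed

lemma sum_cfgs_singleton: "sum f (cfgs d {t}) = (\<Sum>k<d. f ((\<lambda>_. 0)(t := k)))"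
proof -
  have single: "(\<lambda>_. 0)(t := c t) = c" if "c \<in> cfgs d {t}" for c
    using valid_zero[of d "{t}" c] that by (auto simp: fun_eq_iff cfgs_def)
  show ?thesis
    by (rule sum.reindex_bij_witness[where j = "\<lambda>c. c t" and i = "\<lambda>k. (\<lambda>_. 0)(t := k)"])
      (auto simp: single cfgs_def valid_less intro!: validI split: if_splits)
qed

lemma sum_cfgs_triple:
  assumes "t1 \<noteq> t2" "t1 \<noteq> t3" "t2 \<noteq> t3"
  shows "(\<Sum>c\<in>cfgs d {t1, t2, t3}. h (c t1, c t2, c t3)) = (\<Sum>v\<in>idx3 d. h v)"
  by (rule sum.reindex_bij_witness[where j = "\<lambda>c. (c t1, c t2, c t3)"
        and i = "\<lambda>(k1, k2, k3). (\<lambda>_. 0)(t1 := k1, t2 := k2, t3 := k3)"])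
    (use assms in \<open>auto simp: cfgs_def idx3_def valid_less fun_eq_iff valid_zero
      intro!: validI split: if_splits\<close>)

section \<open>The operator monoid\<close>

definition op_norm :: "nat \<Rightarrow> label set \<Rightarrow> op \<Rightarrow> op" where
  "op_norm d S F = (\<lambda>u i. if valid d S u \<and> valid d S i then F u i else 0)"

definition op_comp :: "nat \<Rightarrow> label set \<Rightarrow> op \<Rightarrow> op \<Rightarrow> op" where
  "op_comp d S F G = op_norm d S (op_mult d S F G)"

definition op_one :: "nat \<Rightarrow> label set \<Rightarrow> op" where
  "op_one d S = op_norm d S op_id"

text \<open>Operators are only compared on valid configurations (\<^const>\<open>op_eq\<close>). Normalising them
  to 0 elsewhere turns the normalised operators into a monoid under \<^const>\<open>op_comp\<close>.\<close>

lemma op_eq_iff_norm: "op_eq d S F G \<longleftrightarrow> op_norm d S F = op_norm d S G"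
  unfolding op_eq_def op_norm_def fun_eq_iff by (intro iffI allI impI; metis)

lemma op_eq_refl [simp]: "op_eq d S F F"
  by (simp add: op_eq_def)

lemma op_eq_sym: "op_eq d S F G \<Longrightarrow> op_eq d S G F"
  by (simp add: op_eq_def)

lemma op_eq_trans [trans]: "op_eq d S F G \<Longrightarrow> op_eq d S G H \<Longrightarrow> op_eq d S F H"
  by (simp add: op_eq_def)

lemma op_eq_norm [simp]: "op_eq d S (op_norm d S F) F"
  by (simp add: op_eq_def op_norm_def)

lemma op_mult_cong:
  "op_eq d S F F' \<Longrightarrow> op_eq d S G G' \<Longrightarrow> op_eq d S (op_mult d S F G) (op_mult d S F' G')"
  unfolding op_eq_def op_mult_def by (auto simp: cfgs_def intro!: sum.cong)

lemma op_mult_assoc: "op_mult d S (op_mult d S F G) H = op_mult d S F (op_mult d S G H)"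
  unfolding op_mult_def
  by (auto intro!: ext simp: sum_distrib_left sum_distrib_right mult.assoc intro: sum.swap)

lemma op_mult_id_left: "finite S \<Longrightarrow> op_eq d S (op_mult d S op_id F) F"
  unfolding op_eq_def op_mult_def op_id_def
  by (simp add: finite_cfgs if_distrib[of "\<lambda>x. x * _"] cong: if_cong)

lemma op_mult_id_right: "finite S \<Longrightarrow> op_eq d S (op_mult d S F op_id) F"
  unfolding op_eq_def op_mult_def op_id_def
  by (simp add: finite_cfgs if_distrib[of "\<lambda>x. _ * x"] cong: if_cong)

lemma op_comp_norm_left [simp]: "op_comp d S (op_norm d S F) G = op_comp d S F G"
  unfolding op_comp_def op_eq_iff_norm[symmetric] by (rule op_mult_cong) simp_all

lemma op_comp_norm_right [simp]: "op_comp d S F (op_norm d S G) = op_comp d S F G"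
  unfolding op_comp_def op_eq_iff_norm[symmetric] by (rule op_mult_cong) simp_all

lemma monoid_on_op_comp:
  assumes "finite S"
  shows "monoid_on (op_comp d S) (op_one d S) (range (op_norm d S))"
proof
  show "op_comp d S (op_comp d S F G) H = op_comp d S F (op_comp d S G H)" for F G H
    by (metis op_comp_def op_comp_norm_left op_comp_norm_right op_mult_assoc)
  show "op_comp d S F G \<in> range (op_norm d S)" for F G
    by (simp add: op_comp_def)
  show "op_one d S \<in> range (op_norm d S)"
    by (simp add: op_one_def)
  show "op_comp d S (op_one d S) F = F" if F: "F \<in> range (op_norm d S)" for F
  proof -
    obtain G where "F = op_norm d S G" using F by blast
    then have "op_comp d S (op_one d S) F = op_norm d S (op_mult d S op_id G)"
      by (simp add: op_one_def op_comp_def[of d S op_id])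
    then show ?thesis
      using op_mult_id_left[OF assms] \<open>F = op_norm d S G\<close> by (simp add: op_eq_iff_norm)
  qed
  show "op_comp d S F (op_one d S) = F" if F: "F \<in> range (op_norm d S)" for F
  proof -
    obtain G where "F = op_norm d S G" using F by blast
    then have "op_comp d S F (op_one d S) = op_norm d S (op_mult d S G op_id)"
      by (simp add: op_one_def op_comp_def[of d S G])
    then show ?thesis
      using op_mult_id_right[OF assms] \<open>F = op_norm d S G\<close> by (simp add: op_eq_iff_norm)
  qed
qed

lemma op_comp_one_right: "finite S \<Longrightarrow> op_comp d S F (op_one d S) = op_norm d S F"
  using monoid_on.right_neutral[OF monoid_on_op_comp, of S "op_norm d S F" d] by simp

lemma op_comp_assoc_eq: "op_eq d S (op_comp d S (op_comp d S F G) H) (op_mult d S F (op_mult d S G H))"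
proof -
  have "op_comp d S (op_comp d S F G) H = op_norm d S (op_mult d S F (op_mult d S G H))"
    by (metis op_comp_def op_comp_norm_left op_mult_assoc)
  then show ?thesis by simp
qed

lemma op_prod_three:
  "finite S \<Longrightarrow> op_eq d S (op_prod d S [F, G, H]) (op_mult d S F (op_mult d S G H))"
  unfolding op_prod_def using op_mult_id_right by (simp add: op_mult_cong)

abbreviation op_listprod :: "nat \<Rightarrow> label set \<Rightarrow> op list \<Rightarrow> op" where
  "op_listprod d S \<equiv> monoid_on.listprod (op_comp d S) (op_one d S)"

lemma op_norm_op_prod:
  assumes "finite S"
  shows "op_norm d S (op_prod d S Fs) = op_listprod d S (map (op_norm d S) Fs)"
proof -
  interpret monoid_on "op_comp d S" "op_one d S" "range (op_norm d S)"
    using assms by (rule monoid_on_op_comp)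
  show ?thesis
    by (induction Fs) (simp_all add: op_prod_def op_one_def[symmetric] op_comp_def[symmetric],
        metis op_comp_norm_right)
qed

section \<open>Extension by the identity\<close>

lemma indicator_mult: "(if P then 1 else 0) * (if Q then 1 else 0) = (if P \<and> Q then 1 else (0::complex))"
  by simp

lemma extend_add:
  assumes "valid d T x" "valid d T x'" "valid d (W - T) y" "valid d (W - T) y'"
  shows "extend W T F (x + y) (x' + y') = F x x' * (if y = y' then 1 else 0)"
proof -
  have "restr T (x + y) = x" "restr T (x' + y') = x'"
    using assms restr_add[of d T _ "W - T"] by auto
  moreover have "(\<forall>l\<in>W - T. (x + y) l = (x' + y') l) \<longleftrightarrow> y = y'"
  proof -
    have "(x + y) l = y l" "(x' + y') l = y' l" if "l \<in> W - T" for l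
      using that valid_zero[OF assms(1)] valid_zero[OF assms(2)] by auto
    then show ?thesis
      using valid_eqI[OF assms(3,4)] by auto
  qed
  ultimately show ?thesis
    by (simp add: extend_def)
qed

lemma extend_extend:
  assumes "T' \<subseteq> T" "T \<subseteq> W"
  shows "extend W T (extend T T' F) = extend W T' F"
proof (intro ext)
  fix u i
  have "restr T' (restr T c) = restr T' c" for c
    using assms by (auto simp: restr_def fun_eq_iff)
  moreover have "((\<forall>x\<in>T - T'. restr T u x = restr T i x) \<and> (\<forall>x\<in>W - T. u x = i x)) \<longleftrightarrow>
      (\<forall>x\<in>W - T'. u x = i x)"
    using assms by (auto simp: restr_def)
  ultimately show "extend W T (extend T T' F) u i = extend W T' F u i"
    unfolding extend_def mult.assoc indicator_mult by presburger
qed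

lemma extend_self: "op_eq d W (extend W W F) F"
  by (simp add: op_eq_def extend_def restr_valid_eq)

lemma extend_cong:
  assumes "op_eq d T F G" "T \<subseteq> W"
  shows "op_eq d W (extend W T F) (extend W T G)"
  using assms valid_restr[of d W _ T] by (simp add: op_eq_def extend_def)

lemma extend_id:
  assumes "T \<subseteq> W"
  shows "op_eq d W (extend W T op_id) op_id"
  unfolding op_eq_def
proof (intro allI impI)
  fix u i assume "valid d W u" "valid d W i"
  then have "(restr T u = restr T i \<and> (\<forall>x\<in>W - T. u x = i x)) \<longleftrightarrow> u = i"
    using assms valid_eqI[of d W u i] by (auto simp: restr_eq_iff)
  then show "extend W T op_id u i = op_id u i"
    unfolding extend_def op_id_def indicator_mult by presburger
qed

lemma loc_eq_extend:
  assumes "{a, b, c} \<subseteq> T" "T \<subseteq> W"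
  shows "loc W a b c X = extend W T (loc T a b c X)"
proof (intro ext)
  fix u i
  have "restr T u a = u a" "restr T u b = u b" "restr T u c = u c"
    "restr T i a = i a" "restr T i b = i b" "restr T i c = i c"
    using assms by (auto simp: restr_def)
  moreover have "(\<forall>x\<in>W - {a, b, c}. u x = i x) \<longleftrightarrow>
      (\<forall>x\<in>T - {a, b, c}. restr T u x = restr T i x) \<and> (\<forall>x\<in>W - T. u x = i x)"
    using assms by (auto simp: restr_def)
  ultimately show "loc W a b c X u i = extend W T (loc T a b c X) u i"
    unfolding loc_def extend_def mult.assoc indicator_mult by presburger
qed

lemma extend_mult:
  assumes W: "finite W" "T \<subseteq> W"
  shows "op_eq d W (op_mult d W (extend W T F) (extend W T G)) (extend W T (op_mult d T F G))"
  unfolding op_eq_def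
proof (intro allI impI)
  fix u i assume u: "valid d W u" and i: "valid d W i"
  let ?U = "W - T"
  have split: "W = T \<union> ?U" "T \<inter> ?U = {}" using W by auto
  let ?uT = "restr T u" and ?uU = "restr ?U u" and ?iT = "restr T i" and ?iU = "restr ?U i"
  have restr_valid: "valid d T ?uT" "valid d ?U ?uU" "valid d T ?iT" "valid d ?U ?iU"
    using valid_restr[OF u] valid_restr[OF i] W(2) by auto
  have u_split: "u = ?uT + ?uU" and i_split: "i = ?iT + ?iU"
    using u i split restr_add_restr by metis+
  have "op_mult d W (extend W T F) (extend W T G) u i =
      (\<Sum>a\<in>cfgs d T. \<Sum>b\<in>cfgs d ?U.
        extend W T F (?uT + ?uU) (a + b) * extend W T G (a + b) (?iT + ?iU))"
    unfolding op_mult_def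
    by (subst split(1), subst sum_cfgs_Un[OF split(2)]) (simp flip: u_split i_split)
  also have "\<dots> = (\<Sum>a\<in>cfgs d T. \<Sum>b\<in>cfgs d ?U.
      if b = ?uU then F ?uT a * G a ?iT * (if ?uU = ?iU then 1 else 0) else 0)"
  proof (intro sum.cong refl)
    fix a b assume "a \<in> cfgs d T" "b \<in> cfgs d ?U"
    then show "extend W T F (?uT + ?uU) (a + b) * extend W T G (a + b) (?iT + ?iU) =
        (if b = ?uU then F ?uT a * G a ?iT * (if ?uU = ?iU then 1 else 0) else 0)"
      using restr_valid by (simp add: extend_add)
  qed
  also have "\<dots> = (\<Sum>a\<in>cfgs d T. F ?uT a * G a ?iT * (if ?uU = ?iU then 1 else 0))"
    using W restr_valid by (simp add: finite_cfgs)
  also have "\<dots> = extend W T (op_mult d T F G) u i"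
    by (simp add: extend_def op_mult_def restr_eq_iff sum_distrib_right)
  finally show "op_mult d W (extend W T F) (extend W T G) u i = extend W T (op_mult d T F G) u i" .
qed

lemma extend_mult_extend:
  assumes "finite W" "T \<subseteq> W" "T1 \<subseteq> T" "T2 \<subseteq> T"
  shows "op_eq d W (extend W T (op_mult d T (extend T T1 P) (extend T T2 Q)))
    (op_mult d W (extend W T1 P) (extend W T2 Q))"
  using extend_mult[OF assms(1,2), of d "extend T T1 P" "extend T T2 Q"] assms
  by (simp add: extend_extend op_eq_sym)

lemma extend_op_prod:
  assumes "finite W" "T \<subseteq> W"
  shows "op_eq d W (op_prod d W (map (extend W T) Fs)) (extend W T (op_prod d T Fs))"
proof (induction Fs)
  case Nil
  show ?case using extend_id[OF assms(2)] by (simp add: op_prod_def op_eq_sym)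
next
  case (Cons F Fs)
  have "op_eq d W (op_prod d W (map (extend W T) (F # Fs)))
      (op_mult d W (extend W T F) (extend W T (op_prod d T Fs)))"
    using Cons by (simp add: op_prod_def op_mult_cong)
  also have "op_eq d W \<dots> (extend W T (op_prod d T (F # Fs)))"
    using extend_mult[OF assms] by (simp add: op_prod_def)
  finally show ?case .
qed

lemma op_mult_extend_disjoint:
  assumes W: "finite W" "A \<subseteq> W" "B \<subseteq> W" and disj: "A \<inter> B = {}"
    and u: "valid d W u" and i: "valid d W i"
  shows "op_mult d W (extend W A F) (extend W B G) u i =
    F (restr A u) (restr A i) * G (restr B u) (restr B i) *
    (if \<forall>x\<in>W - (A \<union> B). u x = i x then 1 else 0)"
proof -
  let ?rhs = "F (restr A u) (restr A i) * G (restr B u) (restr B i) *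
    (if \<forall>x\<in>W - (A \<union> B). u x = i x then 1 else 0)"
  \<comment> \<open>the only intermediate configuration with a nonzero contribution\<close>
  define e0 where "e0 = (\<lambda>x. if x \<in> A then i x else u x)"
  have e0: "valid d W e0"
    using W(2) u i by (intro validI) (auto simp: e0_def valid_less valid_zero)
  have "extend W A F u e * extend W B G e i = (if e = e0 then ?rhs else 0)" if e: "valid d W e" for e
  proof (cases "e = e0")
    case True
    have "restr A e0 = restr A i" "restr B e0 = restr B u"
      using disj by (auto simp: restr_def e0_def fun_eq_iff)
    moreover have "\<forall>x\<in>W - A. u x = e0 x"
      by (simp add: e0_def)
    moreover have "(\<forall>x\<in>W - B. e0 x = i x) \<longleftrightarrow> (\<forall>x\<in>W - (A \<union> B). u x = i x)"
      using disj by (auto simp: e0_def)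
    ultimately show ?thesis
      using True by (simp add: extend_def)
  next
    case False
    then obtain x where "x \<in> W" "e x \<noteq> e0 x"
      using valid_eqI[OF e e0] by blast
    then have "(x \<in> W - B \<and> e x \<noteq> i x) \<or> (x \<in> W - A \<and> u x \<noteq> e x)"
      using disj by (auto simp: e0_def split: if_splits)
    then show ?thesis
      using False by (auto simp: extend_def)
  qed
  then have "op_mult d W (extend W A F) (extend W B G) u i =
      (\<Sum>e\<in>cfgs d W. if e = e0 then ?rhs else 0)"
    unfolding op_mult_def by (intro sum.cong) simp_all
  also have "\<dots> = ?rhs"
    using W(1) e0 by (simp add: finite_cfgs)
  finally show ?thesis .
qed

lemma extend_commute:
  assumes "finite W" "A \<subseteq> W" "B \<subseteq> W" "A \<inter> B = {}"
  shows "op_comp d W (extend W A F) (extend W B G) = op_comp d W (extend W B G) (extend W A F)"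
  unfolding op_comp_def op_eq_iff_norm[symmetric] op_eq_def
  using op_mult_extend_disjoint[OF assms] op_mult_extend_disjoint[of W B A, OF assms(1,3,2)] assms(4)
  by (simp add: Int_commute Un_commute mult_ac)

section \<open>Partial traces\<close>

definition ptrace_on :: "nat \<Rightarrow> label set \<Rightarrow> op \<Rightarrow> op" where
  "ptrace_on d Z F = (\<lambda>u i. \<Sum>z\<in>cfgs d Z. F (u + z) (i + z))"

lemma ptrace_on_cong:
  assumes "S \<inter> Z = {}" "op_eq d (S \<union> Z) F G"
  shows "op_eq d S (ptrace_on d Z F) (ptrace_on d Z G)"
  using assms valid_add[of d S _ Z] by (auto simp: op_eq_def ptrace_on_def intro!: sum.cong)

lemma ptrace_on_norm:
  "S \<inter> Z = {} \<Longrightarrow> op_eq d S (ptrace_on d Z (op_norm d (S \<union> Z) F)) (ptrace_on d Z F)"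
  by (rule ptrace_on_cong) simp_all

lemma op_mult_extend_right_entry:
  assumes "finite S" "S \<inter> Z = {}" "valid d S i" "valid d Z z"
  shows "op_mult d (S \<union> Z) F (extend (S \<union> Z) Z g) x (i + z) =
    (\<Sum>z'\<in>cfgs d Z. F x (i + z') * g z' z)"
proof -
  have SZ: "S \<union> Z - Z = S" using assms(2) by auto
  have "op_mult d (S \<union> Z) F (extend (S \<union> Z) Z g) x (i + z) =
      (\<Sum>e\<in>cfgs d S. \<Sum>z'\<in>cfgs d Z. F x (e + z') * extend (S \<union> Z) Z g (z' + e) (z + i))"
    unfolding op_mult_def sum_cfgs_Un[OF assms(2)] by (simp add: add.commute)
  also have "\<dots> = (\<Sum>e\<in>cfgs d S. \<Sum>z'\<in>cfgs d Z. if e = i then F x (i + z') * g z' z else 0)"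
    using assms by (intro sum.cong refl) (simp add: extend_add SZ)
  also have "\<dots> = (\<Sum>z'\<in>cfgs d Z. F x (i + z') * g z' z)"
    using assms by (subst sum.swap) (simp add: finite_cfgs)
  finally show ?thesis .
qed

lemma op_mult_extend_left_entry:
  assumes "finite S" "S \<inter> Z = {}" "valid d S u" "valid d Z z"
  shows "op_mult d (S \<union> Z) (extend (S \<union> Z) Z g) F (u + z) y =
    (\<Sum>z'\<in>cfgs d Z. g z z' * F (u + z') y)"
proof -
  have SZ: "S \<union> Z - Z = S" using assms(2) by auto
  have "op_mult d (S \<union> Z) (extend (S \<union> Z) Z g) F (u + z) y =
      (\<Sum>e\<in>cfgs d S. \<Sum>z'\<in>cfgs d Z. extend (S \<union> Z) Z g (z + u) (z' + e) * F (e + z') y)"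
    unfolding op_mult_def sum_cfgs_Un[OF assms(2)] by (simp add: add.commute)
  also have "\<dots> = (\<Sum>e\<in>cfgs d S. \<Sum>z'\<in>cfgs d Z. if u = e then g z z' * F (u + z') y else 0)"
    using assms by (intro sum.cong refl) (simp add: extend_add SZ)
  also have "\<dots> = (\<Sum>z'\<in>cfgs d Z. g z z' * F (u + z') y)"
    using assms by (subst sum.swap) (simp add: finite_cfgs)
  finally show ?thesis .
qed

lemma ptrace_on_cyclic:
  assumes "finite S" "S \<inter> Z = {}"
  shows "op_eq d S (ptrace_on d Z (op_comp d (S \<union> Z) F (extend (S \<union> Z) Z g)))
    (ptrace_on d Z (op_comp d (S \<union> Z) (extend (S \<union> Z) Z g) F))"
proof -
  have "op_eq d S (ptrace_on d Z (op_mult d (S \<union> Z) F (extend (S \<union> Z) Z g)))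
    (ptrace_on d Z (op_mult d (S \<union> Z) (extend (S \<union> Z) Z g) F))"
    unfolding op_eq_def ptrace_on_def
  proof (intro allI impI)
    fix u i assume u: "valid d S u" and i: "valid d S i"
    have "(\<Sum>z\<in>cfgs d Z. op_mult d (S \<union> Z) F (extend (S \<union> Z) Z g) (u + z) (i + z)) =
        (\<Sum>z\<in>cfgs d Z. \<Sum>z'\<in>cfgs d Z. F (u + z) (i + z') * g z' z)"
      using assms i by (simp add: op_mult_extend_right_entry)
    also have "\<dots> = (\<Sum>z\<in>cfgs d Z. \<Sum>z'\<in>cfgs d Z. g z z' * F (u + z') (i + z))"
      by (subst sum.swap) (simp add: mult.commute)
    also have "\<dots> = (\<Sum>z\<in>cfgs d Z. op_mult d (S \<union> Z) (extend (S \<union> Z) Z g) F (u + z) (i + z))"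
      using assms u by (simp add: op_mult_extend_left_entry)
    finally show "(\<Sum>z\<in>cfgs d Z. op_mult d (S \<union> Z) F (extend (S \<union> Z) Z g) (u + z) (i + z)) =
        (\<Sum>z\<in>cfgs d Z. op_mult d (S \<union> Z) (extend (S \<union> Z) Z g) F (u + z) (i + z))" .
  qed
  then show ?thesis
    unfolding op_comp_def
    by (rule op_eq_trans[OF ptrace_on_norm[OF assms(2)]
          op_eq_trans[OF _ op_eq_sym[OF ptrace_on_norm[OF assms(2)]]]])
qed

lemma op_mult_extend_diag_entry:
  assumes fin: "finite S" "finite Z1" "finite Z2"
    and disj: "S \<inter> Z1 = {}" "S \<inter> Z2 = {}" "Z1 \<inter> Z2 = {}"
    and valid: "valid d S u" "valid d S i" "valid d Z1 z1" "valid d Z2 z2"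
  shows "op_mult d (S \<union> Z1 \<union> Z2) (extend (S \<union> Z1 \<union> Z2) (S \<union> Z1) A)
      (extend (S \<union> Z1 \<union> Z2) (S \<union> Z2) B) (u + z1 + z2) (i + z1 + z2) =
    (\<Sum>e\<in>cfgs d S. A (u + z1) (e + z1) * B (e + z2) (i + z2))"
proof -
  let ?W = "S \<union> Z1 \<union> Z2"
  have compl: "?W - (S \<union> Z1) = Z2" "?W - (S \<union> Z2) = Z1" and disj': "(S \<union> Z1) \<inter> Z2 = {}"
    using disj by auto
  have entry: "extend ?W (S \<union> Z1) A (u + z1 + z2) (e + e1 + e2) *
      extend ?W (S \<union> Z2) B (e + e1 + e2) (i + z1 + z2) =
      (if e2 = z2 then if e1 = z1 then A (u + z1) (e + z1) * B (e + z2) (i + z2) else 0 else 0)"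
    if "valid d S e" "valid d Z1 e1" "valid d Z2 e2" for e e1 e2
  proof -
    have "extend ?W (S \<union> Z1) A (u + z1 + z2) (e + e1 + e2) =
        A (u + z1) (e + e1) * (if z2 = e2 then 1 else 0)"
      using extend_add[of d "S \<union> Z1" "u + z1" "e + e1" ?W z2 e2 A] that valid disj
      by (simp add: compl valid_add)
    moreover have "extend ?W (S \<union> Z2) B (e + e2 + e1) (i + z2 + z1) =
        B (e + e2) (i + z2) * (if e1 = z1 then 1 else 0)"
      using extend_add[of d "S \<union> Z2" "e + e2" "i + z2" ?W e1 z1 B] that valid disj
      by (simp add: compl valid_add)
    ultimately show ?thesis
      by (simp add: add_ac)
  qed
  have "op_mult d ?W (extend ?W (S \<union> Z1) A) (extend ?W (S \<union> Z2) B) (u + z1 + z2) (i + z1 + z2) =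
      (\<Sum>e\<in>cfgs d S. \<Sum>e1\<in>cfgs d Z1. \<Sum>e2\<in>cfgs d Z2.
        if e2 = z2 then if e1 = z1 then A (u + z1) (e + z1) * B (e + z2) (i + z2) else 0 else 0)"
    unfolding op_mult_def sum_cfgs_Un[OF disj'] sum_cfgs_Un[OF disj(1)]
    by (intro sum.cong refl) (simp add: entry)
  also have "\<dots> = (\<Sum>e\<in>cfgs d S. A (u + z1) (e + z1) * B (e + z2) (i + z2))"
    using fin valid by (simp add: finite_cfgs)
  finally show ?thesis .
qed

lemma ptrace_on_mult_disjoint:
  assumes fin: "finite S" "finite Z1" "finite Z2"
    and disj: "S \<inter> Z1 = {}" "S \<inter> Z2 = {}" "Z1 \<inter> Z2 = {}"
  shows "op_eq d S
    (ptrace_on d (Z1 \<union> Z2) (op_mult d (S \<union> Z1 \<union> Z2) (extend (S \<union> Z1 \<union> Z2) (S \<union> Z1) A)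
      (extend (S \<union> Z1 \<union> Z2) (S \<union> Z2) B)))
    (op_mult d S (ptrace_on d Z1 A) (ptrace_on d Z2 B))"
  unfolding op_eq_def
proof (intro allI impI)
  fix u i assume "valid d S u" "valid d S i"
  let ?X = "op_mult d (S \<union> Z1 \<union> Z2) (extend (S \<union> Z1 \<union> Z2) (S \<union> Z1) A)
      (extend (S \<union> Z1 \<union> Z2) (S \<union> Z2) B)"
  have "ptrace_on d (Z1 \<union> Z2) ?X u i =
      (\<Sum>z1\<in>cfgs d Z1. \<Sum>z2\<in>cfgs d Z2. ?X (u + z1 + z2) (i + z1 + z2))"
    unfolding ptrace_on_def sum_cfgs_Un[OF disj(3)] by (simp add: add.assoc)
  also have "\<dots> = (\<Sum>z1\<in>cfgs d Z1. \<Sum>z2\<in>cfgs d Z2. \<Sum>e\<in>cfgs d S.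
      A (u + z1) (e + z1) * B (e + z2) (i + z2))"
    using assms \<open>valid d S u\<close> \<open>valid d S i\<close>
    by (intro sum.cong refl) (simp add: op_mult_extend_diag_entry)
  also have "\<dots> = (\<Sum>e\<in>cfgs d S. (\<Sum>z1\<in>cfgs d Z1. A (u + z1) (e + z1)) *
      (\<Sum>z2\<in>cfgs d Z2. B (e + z2) (i + z2)))"
    by (simp add: sum_product sum.swap[of _ "cfgs d S"])
  also have "\<dots> = op_mult d S (ptrace_on d Z1 A) (ptrace_on d Z2 B) u i"
    by (simp add: op_mult_def ptrace_on_def)
  finally show "ptrace_on d (Z1 \<union> Z2) ?X u i = op_mult d S (ptrace_on d Z1 A) (ptrace_on d Z2 B) u i" .
qed

lemma ptrace_on_mult_disjoint_extend:
  assumes fin: "finite S" "finite Z1" "finite Z2"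
    and disj: "S \<inter> Z1 = {}" "S \<inter> Z2 = {}" "Z1 \<inter> Z2 = {}"
    and T: "T1 \<subseteq> S \<union> Z1" "T2 \<subseteq> S \<union> Z2"
  shows "op_eq d S
    (op_mult d S (ptrace_on d Z1 (extend (S \<union> Z1) T1 P)) (ptrace_on d Z2 (extend (S \<union> Z2) T2 Q)))
    (ptrace_on d (Z1 \<union> Z2) (op_mult d (S \<union> Z1 \<union> Z2)
      (extend (S \<union> Z1 \<union> Z2) T1 P) (extend (S \<union> Z1 \<union> Z2) T2 Q)))"
proof -
  have "extend (S \<union> Z1 \<union> Z2) (S \<union> Z1) (extend (S \<union> Z1) T1 P) = extend (S \<union> Z1 \<union> Z2) T1 P"
    "extend (S \<union> Z1 \<union> Z2) (S \<union> Z2) (extend (S \<union> Z2) T2 Q) = extend (S \<union> Z1 \<union> Z2) T2 Q"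
    using T by (auto intro!: extend_extend)
  from ptrace_on_mult_disjoint[OF fin disj, of d "extend (S \<union> Z1) T1 P" "extend (S \<union> Z2) T2 Q",
      unfolded this]
  show ?thesis by (rule op_eq_sym)
qed

lemma ptrace_on_singleton:
  assumes "t \<notin> S" "t \<in> T" "T \<subseteq> S \<union> {t}"
  shows "op_eq d S (extend S (T - {t}) (ptrace d t P)) (ptrace_on d {t} (extend (S \<union> {t}) T P))"
  unfolding op_eq_def
proof (intro allI impI)
  fix u i assume u: "valid d S u" and i: "valid d S i"
  have upd: "c + (\<lambda>_. 0)(t := k) = c(t := k)" if "valid d S c" for c k
    using valid_zero[OF that] assms(1) by (auto simp: fun_eq_iff)
  have restr_upd: "restr T (c(t := k)) = (restr (T - {t}) c)(t := k)" for c k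
    using assms(2) by (auto simp: restr_def fun_eq_iff)
  have "S \<union> {t} - T = S - (T - {t})"
    using assms(1,2) by auto
  then show "extend S (T - {t}) (ptrace d t P) u i = ptrace_on d {t} (extend (S \<union> {t}) T P) u i"
    by (simp add: ptrace_on_def sum_cfgs_singleton upd u i extend_def restr_upd ptrace_def
        sum_distrib_right)
qed

lemma ptrace_product_two:
  assumes fin: "finite S" and distinct: "t2 \<noteq> t3" and outside: "t2 \<notin> S" "t3 \<notin> S"
    and T: "t2 \<in> T2" "T2 \<subseteq> S \<union> {t2}" "t3 \<in> T3" "T3 \<subseteq> S \<union> {t3}"
  defines "V \<equiv> S \<union> {t2, t3}"
  shows "op_eq d S
    (op_mult d S (extend S (T2 - {t2}) (ptrace d t2 P2)) (extend S (T3 - {t3}) (ptrace d t3 P3)))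
    (ptrace_on d {t2, t3} (op_mult d V (extend V T2 P2) (extend V T3 P3)))"
proof -
  have sets: "S \<union> {t2} \<union> {t3} = V" "{t2} \<union> {t3} = {t2, t3}"
    by (auto simp: V_def)
  have "op_eq d S
      (op_mult d S (extend S (T2 - {t2}) (ptrace d t2 P2)) (extend S (T3 - {t3}) (ptrace d t3 P3)))
      (op_mult d S (ptrace_on d {t2} (extend (S \<union> {t2}) T2 P2))
        (ptrace_on d {t3} (extend (S \<union> {t3}) T3 P3)))"
    using outside T by (intro op_mult_cong ptrace_on_singleton)
  also have "op_eq d S \<dots> (ptrace_on d {t2, t3} (op_mult d V (extend V T2 P2) (extend V T3 P3)))"
    using ptrace_on_mult_disjoint_extend[of S "{t2}" "{t3}" T2 T3 d P2 P3] fin distinct outside T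
    unfolding sets by simp
  finally show ?thesis .
qed

lemma ptrace_product_three:
  assumes fin: "finite S" and distinct: "t1 \<noteq> t2" "t1 \<noteq> t3" "t2 \<noteq> t3"
    and outside: "t1 \<notin> S" "t2 \<notin> S" "t3 \<notin> S"
    and T: "t1 \<in> T1" "T1 \<subseteq> S \<union> {t1}" "t2 \<in> T2" "T2 \<subseteq> S \<union> {t2}" "t3 \<in> T3" "T3 \<subseteq> S \<union> {t3}"
  defines "W \<equiv> S \<union> {t1, t2, t3}"
  shows "op_eq d S
    (op_mult d S (extend S (T1 - {t1}) (ptrace d t1 P1))
      (op_mult d S (extend S (T2 - {t2}) (ptrace d t2 P2)) (extend S (T3 - {t3}) (ptrace d t3 P3))))
    (ptrace_on d {t1, t2, t3}
      (op_mult d W (extend W T1 P1) (op_mult d W (extend W T2 P2) (extend W T3 P3))))"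
proof -
  let ?V = "S \<union> {t2, t3}"
  let ?B = "op_mult d ?V (extend ?V T2 P2) (extend ?V T3 P3)"
  have sets: "S \<union> {t1} \<union> {t2, t3} = W" "{t1} \<union> {t2, t3} = {t1, t2, t3}"
    by (auto simp: W_def)
  \<comment> \<open>\<open>?B\<close> in the shape of an extension, as required by the factorisation below\<close>
  have "op_eq d S
      (op_mult d S (extend S (T2 - {t2}) (ptrace d t2 P2)) (extend S (T3 - {t3}) (ptrace d t3 P3)))
      (ptrace_on d {t2, t3} (extend ?V ?V ?B))"
    using ptrace_product_two[OF fin distinct(3) outside(2,3) T(3-6), of d P2 P3]
      ptrace_on_cong[of S "{t2, t3}" d "extend ?V ?V ?B" ?B] outside
    by (auto simp: extend_self intro: op_eq_trans op_eq_sym)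
  then have "op_eq d S
      (op_mult d S (extend S (T1 - {t1}) (ptrace d t1 P1))
        (op_mult d S (extend S (T2 - {t2}) (ptrace d t2 P2)) (extend S (T3 - {t3}) (ptrace d t3 P3))))
      (op_mult d S (ptrace_on d {t1} (extend (S \<union> {t1}) T1 P1))
        (ptrace_on d {t2, t3} (extend ?V ?V ?B)))"
    using ptrace_on_singleton[OF outside(1) T(1,2)] by (rule op_mult_cong[rotated])
  also have "op_eq d S \<dots> (ptrace_on d {t1, t2, t3} (op_mult d W (extend W T1 P1) (extend W ?V ?B)))"
    using ptrace_on_mult_disjoint_extend[of S "{t1}" "{t2, t3}" T1 ?V d P1 ?B] fin outside distinct T
    unfolding sets by simp
  also have "op_eq d S \<dots> (ptrace_on d {t1, t2, t3}
      (op_mult d W (extend W T1 P1) (op_mult d W (extend W T2 P2) (extend W T3 P3))))"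
    using outside fin T extend_mult_extend[of W ?V T2 T3 d P2 P3] unfolding W_def
    by (intro ptrace_on_cong op_mult_cong) auto
  finally show ?thesis .
qed

section \<open>Local operators and the tetrahedron equation\<close>

lemma col_col [simp]: "col (col \<sigma> k) m = col \<sigma> (k + m)"
  by (auto simp: col_def)

lemma Xop_eq_extend:
  "{(\<alpha>, \<beta>), (\<alpha>, \<gamma>), (\<beta>, \<gamma>)} \<subseteq> T \<Longrightarrow> T \<subseteq> W \<Longrightarrow>
    Xop W r X \<tau> \<alpha> \<beta> \<gamma> = extend W T (Xop T r X \<tau> \<alpha> \<beta> \<gamma>)"
  unfolding Xop_def by (rule loc_eq_extend)

lemma Xop_commute:
  assumes "finite W" "{(p, \<alpha>), (p, \<beta>), (\<alpha>, \<beta>)} \<subseteq> W" "{(p', \<alpha>'), (p', \<beta>'), (\<alpha>', \<beta>')} \<subseteq> W"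
    and "p \<noteq> p'" "p < \<alpha>'" "p' < \<alpha>" "(\<alpha>, \<beta>) \<noteq> (\<alpha>', \<beta>')"
  shows "op_comp d W (Xop W r X \<tau> p \<alpha> \<beta>) (Xop W r Y \<tau>' p' \<alpha>' \<beta>') =
    op_comp d W (Xop W r Y \<tau>' p' \<alpha>' \<beta>') (Xop W r X \<tau> p \<alpha> \<beta>)"
proof -
  have "{(p, \<alpha>), (p, \<beta>), (\<alpha>, \<beta>)} \<inter> {(p', \<alpha>'), (p', \<beta>'), (\<alpha>', \<beta>')} = {}"
    using assms(4-) by auto
  with assms(1-3) show ?thesis
    unfolding Xop_eq_extend[OF subset_refl assms(2)] Xop_eq_extend[OF subset_refl assms(3)]
    by (rule extend_commute)
qed

lemma loc_mult_inverse:
  assumes fin: "finite W" and distinct: "t1 \<noteq> t2" "t1 \<noteq> t3" "t2 \<noteq> t3"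
    and sub: "{t1, t2, t3} \<subseteq> W"
    and inverse: "\<forall>u\<in>idx3 d. \<forall>w\<in>idx3 d. (\<Sum>v\<in>idx3 d. X u v * Y v w) = (if u = w then 1 else 0)"
  shows "op_comp d W (loc W t1 t2 t3 X) (loc W t1 t2 t3 Y) = op_one d W"
proof -
  let ?Z = "{t1, t2, t3}"
  have on_Z: "op_eq d ?Z (op_mult d ?Z (loc ?Z t1 t2 t3 X) (loc ?Z t1 t2 t3 Y)) op_id"
    unfolding op_eq_def
  proof (intro allI impI)
    fix u i assume u: "valid d ?Z u" and i: "valid d ?Z i"
    have "op_mult d ?Z (loc ?Z t1 t2 t3 X) (loc ?Z t1 t2 t3 Y) u i =
        (\<Sum>v\<in>idx3 d. X (u t1, u t2, u t3) v * Y v (i t1, i t2, i t3))"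
      unfolding op_mult_def loc_def
      using sum_cfgs_triple[OF distinct,
          where h = "\<lambda>v. X (u t1, u t2, u t3) v * Y v (i t1, i t2, i t3)"]
      by simp
    also have "\<dots> = (if (u t1, u t2, u t3) = (i t1, i t2, i t3) then 1 else 0)"
      using inverse u i by (simp add: idx3_def valid_less)
    also have "\<dots> = op_id u i"
      using valid_eqI[OF u i] by (auto simp: op_id_def)
    finally show "op_mult d ?Z (loc ?Z t1 t2 t3 X) (loc ?Z t1 t2 t3 Y) u i = op_id u i" .
  qed
  have "op_eq d W (op_mult d W (loc W t1 t2 t3 X) (loc W t1 t2 t3 Y))
      (extend W ?Z (op_mult d ?Z (loc ?Z t1 t2 t3 X) (loc ?Z t1 t2 t3 Y)))"
    unfolding loc_eq_extend[OF subset_refl sub] by (rule extend_mult[OF fin sub])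
  also have "op_eq d W \<dots> (extend W ?Z op_id)"
    using on_Z sub by (rule extend_cong)
  also have "op_eq d W \<dots> op_id"
    using sub by (rule extend_id)
  finally show ?thesis
    by (simp add: op_comp_def op_one_def op_eq_iff_norm)
qed

lemma loc_inverse:
  assumes "finite W" "t1 \<noteq> t2" "t1 \<noteq> t3" "t2 \<noteq> t3" "{t1, t2, t3} \<subseteq> W" "invertible3 d X"
  obtains Y where "op_comp d W (loc W t1 t2 t3 X) (loc W t1 t2 t3 Y) = op_one d W"
    "op_comp d W (loc W t1 t2 t3 Y) (loc W t1 t2 t3 X) = op_one d W"
proof -
  from assms(6) obtain Y where XY: "\<forall>u\<in>idx3 d. \<forall>w\<in>idx3 d.
      (\<Sum>v\<in>idx3 d. X u v * Y v w) = (if u = w then 1 else 0) \<and>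
      (\<Sum>v\<in>idx3 d. Y u v * X v w) = (if u = w then 1 else 0)"
    unfolding invertible3_def by blast
  have "op_comp d W (loc W t1 t2 t3 X) (loc W t1 t2 t3 Y) = op_one d W"
    "op_comp d W (loc W t1 t2 t3 Y) (loc W t1 t2 t3 X) = op_one d W"
    by (rule loc_mult_inverse[OF assms(1-5)], use XY in blast)+
  then show ?thesis
    by (rule that)
qed

lemma BTE_extend:
  assumes bte: "BTE d R R1 R2 R3 \<tau>" and order: "p < b" "b < c" "c < e"
    and W: "finite W" "six_space p b c e \<subseteq> W"
  shows "op_eq d W
    (op_prod d W [Xop W r R \<tau> p b c, Xop W r R1 (col \<tau> 1) p b e,
                  Xop W r R2 \<tau> p c e, Xop W r R3 (col \<tau> 1) b c e])
    (op_prod d W [Xop W r R3 \<tau> b c e, Xop W r R2 (col \<tau> 1) p c e,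
                  Xop W r R1 \<tau> p b e, Xop W r R (col \<tau> 1) p b c])"
proof -
  let ?S = "six_space p b c e"
  have "op_eq d ?S
      (op_prod d ?S [Xop ?S r R \<tau> p b c, Xop ?S r R1 (col \<tau> 1) p b e,
                     Xop ?S r R2 \<tau> p c e, Xop ?S r R3 (col \<tau> 1) b c e])
      (op_prod d ?S [Xop ?S r R3 \<tau> b c e, Xop ?S r R2 (col \<tau> 1) p c e,
                     Xop ?S r R1 \<tau> p b e, Xop ?S r R (col \<tau> 1) p b c])"
    by (rule bte[unfolded BTE_def Let_def, rule_format, OF order])
  note eq = this
  have ext: "Xop W r X \<tau>' \<alpha> \<beta> \<gamma> = extend W ?S (Xop ?S r X \<tau>' \<alpha> \<beta> \<gamma>)"
    if "{(\<alpha>, \<beta>), (\<alpha>, \<gamma>), (\<beta>, \<gamma>)} \<subseteq> ?S" for X \<tau>' \<alpha> \<beta> \<gamma>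
    using that W(2) by (rule Xop_eq_extend)
  have "(p, b) \<in> ?S" "(p, c) \<in> ?S" "(p, e) \<in> ?S" "(b, c) \<in> ?S" "(b, e) \<in> ?S" "(c, e) \<in> ?S"
    by (simp_all add: six_space_def)
  then have lists:
    "[Xop W r R \<tau> p b c, Xop W r R1 (col \<tau> 1) p b e, Xop W r R2 \<tau> p c e, Xop W r R3 (col \<tau> 1) b c e] =
      map (extend W ?S) [Xop ?S r R \<tau> p b c, Xop ?S r R1 (col \<tau> 1) p b e,
                         Xop ?S r R2 \<tau> p c e, Xop ?S r R3 (col \<tau> 1) b c e]"
    "[Xop W r R3 \<tau> b c e, Xop W r R2 (col \<tau> 1) p c e, Xop W r R1 \<tau> p b e, Xop W r R (col \<tau> 1) p b c] =
      map (extend W ?S) [Xop ?S r R3 \<tau> b c e, Xop ?S r R2 (col \<tau> 1) p c e,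
                         Xop ?S r R1 \<tau> p b e, Xop ?S r R (col \<tau> 1) p b c]"
    by (simp_all add: ext)
  show ?thesis
    unfolding lists
    using op_eq_trans[OF extend_op_prod[OF W] extend_cong[OF eq W(2)]]
      op_eq_sym[OF extend_op_prod[OF W]] by (rule op_eq_trans)
qed

definition layer_lhs :: "nat \<Rightarrow> label set \<Rightarrow> (nat \<Rightarrow> 'c) \<Rightarrow> (bool \<Rightarrow> 'c \<Rightarrow> 'c \<Rightarrow> 'c \<Rightarrow> mat3)
    \<Rightarrow> (bool \<Rightarrow> 'c \<Rightarrow> 'c \<Rightarrow> 'c \<Rightarrow> mat3) \<Rightarrow> (bool \<Rightarrow> 'c \<Rightarrow> 'c \<Rightarrow> 'c \<Rightarrow> mat3)
    \<Rightarrow> bool \<Rightarrow> nat \<Rightarrow> nat \<Rightarrow> nat \<Rightarrow> nat \<Rightarrow> op" where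
  "layer_lhs d W r R R1 R2 \<tau> p b c e = op_comp d W
    (op_comp d W (Xop W r R \<tau> p b c) (Xop W r R1 (col \<tau> 1) p b e)) (Xop W r R2 \<tau> p c e)"

definition layer_rhs :: "nat \<Rightarrow> label set \<Rightarrow> (nat \<Rightarrow> 'c) \<Rightarrow> (bool \<Rightarrow> 'c \<Rightarrow> 'c \<Rightarrow> 'c \<Rightarrow> mat3)
    \<Rightarrow> (bool \<Rightarrow> 'c \<Rightarrow> 'c \<Rightarrow> 'c \<Rightarrow> mat3) \<Rightarrow> (bool \<Rightarrow> 'c \<Rightarrow> 'c \<Rightarrow> 'c \<Rightarrow> mat3)
    \<Rightarrow> bool \<Rightarrow> nat \<Rightarrow> nat \<Rightarrow> nat \<Rightarrow> nat \<Rightarrow> op" where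
  "layer_rhs d W r R R1 R2 \<tau> p b c e = op_comp d W
    (op_comp d W (Xop W r R2 (col \<tau> 1) p c e) (Xop W r R1 \<tau> p b e)) (Xop W r R (col \<tau> 1) p b c)"

lemma BTE_layer:
  assumes "BTE d R R1 R2 R3 \<tau>" "p < b" "b < c" "c < e" "finite W" "six_space p b c e \<subseteq> W"
  shows "op_comp d W (layer_lhs d W r R R1 R2 \<tau> p b c e) (Xop W r R3 (col \<tau> 1) b c e) =
    op_comp d W (Xop W r R3 \<tau> b c e) (layer_rhs d W r R R1 R2 \<tau> p b c e)"
proof -
  interpret monoid_on "op_comp d W" "op_one d W" "range (op_norm d W)"
    using assms(5) by (rule monoid_on_op_comp)
  from BTE_extend[OF assms, of r, unfolded op_eq_iff_norm op_norm_op_prod[OF assms(5)]]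
  show ?thesis
    by (simp add: layer_lhs_def layer_rhs_def assoc op_comp_one_right[OF assms(5)])
qed

definition monodromy :: "nat \<Rightarrow> label set \<Rightarrow> nat list \<Rightarrow> (nat \<Rightarrow> 'c)
    \<Rightarrow> (bool \<Rightarrow> 'c \<Rightarrow> 'c \<Rightarrow> 'c \<Rightarrow> mat3) \<Rightarrow> bool \<Rightarrow> nat \<Rightarrow> nat \<Rightarrow> op" where
  "monodromy d S ps r X \<sigma> \<alpha> \<beta> =
    op_prod d S (map (\<lambda>l. Xop S r X (col \<sigma> (Suc l)) (ps ! l) \<alpha> \<beta>) [0..<length ps])"

lemma monodromy_extend:
  assumes "finite W" "tr_space ps \<alpha> \<beta> \<subseteq> W"
  shows "op_eq d W (extend W (tr_space ps \<alpha> \<beta>) (monodromy d (tr_space ps \<alpha> \<beta>) ps r X \<sigma> \<alpha> \<beta>))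
    (monodromy d W ps r X \<sigma> \<alpha> \<beta>)"
proof -
  have "Xop W r X (col \<sigma> (Suc l)) (ps ! l) \<alpha> \<beta> =
      extend W (tr_space ps \<alpha> \<beta>) (Xop (tr_space ps \<alpha> \<beta>) r X (col \<sigma> (Suc l)) (ps ! l) \<alpha> \<beta>)"
    if "l < length ps" for l
    using that assms(2) by (intro Xop_eq_extend) (auto simp: tr_space_def)
  then have "map (\<lambda>l. Xop W r X (col \<sigma> (Suc l)) (ps ! l) \<alpha> \<beta>) [0..<length ps] =
      map (extend W (tr_space ps \<alpha> \<beta>))
        (map (\<lambda>l. Xop (tr_space ps \<alpha> \<beta>) r X (col \<sigma> (Suc l)) (ps ! l) \<alpha> \<beta>) [0..<length ps])"
    by simp
  then show ?thesis
    unfolding monodromy_def by (simp only:) (rule op_eq_sym[OF extend_op_prod[OF assms]])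
qed

lemma monodromy_factors_commute:
  assumes "finite W" "sorted_wrt (<) ps" "m < l" "l < length ps"
    and "tr_space ps \<alpha> \<beta> \<subseteq> W" "tr_space ps \<alpha>' \<beta>' \<subseteq> W" "\<forall>p\<in>set ps. p < \<alpha> \<and> p < \<alpha>'"
    and "(\<alpha>, \<beta>) \<noteq> (\<alpha>', \<beta>')"
  shows "op_comp d W (Xop W r X \<tau> (ps ! m) \<alpha> \<beta>) (Xop W r Y \<tau>' (ps ! l) \<alpha>' \<beta>') =
    op_comp d W (Xop W r Y \<tau>' (ps ! l) \<alpha>' \<beta>') (Xop W r X \<tau> (ps ! m) \<alpha> \<beta>)"
proof -
  have mem: "ps ! m \<in> set ps" "ps ! l \<in> set ps" and "ps ! m \<noteq> ps ! l"
    using assms(3,4) sorted_wrt_nth_less[OF assms(2-4)] by auto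
  moreover have "{(ps ! m, \<alpha>), (ps ! m, \<beta>), (\<alpha>, \<beta>)} \<subseteq> W" "{(ps ! l, \<alpha>'), (ps ! l, \<beta>'), (\<alpha>', \<beta>')} \<subseteq> W"
    using assms(5,6) mem by (auto simp: tr_space_def)
  ultimately show ?thesis
    using assms(1,7,8) mem by (intro Xop_commute) auto
qed

lemma monodromy_product_interleave:
  assumes W: "finite W" "tr_space ps \<alpha>1 \<beta>1 \<subseteq> W" "tr_space ps \<alpha>2 \<beta>2 \<subseteq> W" "tr_space ps \<alpha>3 \<beta>3 \<subseteq> W"
    and ps: "sorted_wrt (<) ps" "\<forall>p\<in>set ps. p < \<alpha>1 \<and> p < \<alpha>2 \<and> p < \<alpha>3"
    and distinct: "(\<alpha>1, \<beta>1) \<noteq> (\<alpha>2, \<beta>2)" "(\<alpha>1, \<beta>1) \<noteq> (\<alpha>3, \<beta>3)" "(\<alpha>2, \<beta>2) \<noteq> (\<alpha>3, \<beta>3)"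
  shows "op_comp d W (op_comp d W (monodromy d W ps r X1 \<sigma>1 \<alpha>1 \<beta>1) (monodromy d W ps r X2 \<sigma>2 \<alpha>2 \<beta>2))
      (monodromy d W ps r X3 \<sigma>3 \<alpha>3 \<beta>3) =
    op_listprod d W (map (\<lambda>l. op_comp d W
      (op_comp d W (Xop W r X1 (col \<sigma>1 (Suc l)) (ps ! l) \<alpha>1 \<beta>1) (Xop W r X2 (col \<sigma>2 (Suc l)) (ps ! l) \<alpha>2 \<beta>2))
      (Xop W r X3 (col \<sigma>3 (Suc l)) (ps ! l) \<alpha>3 \<beta>3)) [0..<length ps])"
proof -
  interpret monoid_on "op_comp d W" "op_one d W" "range (op_norm d W)"
    using W(1) by (rule monoid_on_op_comp)
  define a where "a l = op_norm d W (Xop W r X1 (col \<sigma>1 (Suc l)) (ps ! l) \<alpha>1 \<beta>1)" for l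
  define b where "b l = op_norm d W (Xop W r X2 (col \<sigma>2 (Suc l)) (ps ! l) \<alpha>2 \<beta>2)" for l
  define c where "c l = op_norm d W (Xop W r X3 (col \<sigma>3 (Suc l)) (ps ! l) \<alpha>3 \<beta>3)" for l
  have "op_comp d W (op_comp d W (monodromy d W ps r X1 \<sigma>1 \<alpha>1 \<beta>1) (monodromy d W ps r X2 \<sigma>2 \<alpha>2 \<beta>2))
      (monodromy d W ps r X3 \<sigma>3 \<alpha>3 \<beta>3) =
    op_comp d W (op_comp d W (listprod (map a [0..<length ps])) (listprod (map b [0..<length ps])))
      (listprod (map c [0..<length ps]))"
  proof -
    have "listprod (map a [0..<length ps]) = op_norm d W (monodromy d W ps r X1 \<sigma>1 \<alpha>1 \<beta>1)"
      "listprod (map b [0..<length ps]) = op_norm d W (monodromy d W ps r X2 \<sigma>2 \<alpha>2 \<beta>2)"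
      "listprod (map c [0..<length ps]) = op_norm d W (monodromy d W ps r X3 \<sigma>3 \<alpha>3 \<beta>3)"
      unfolding monodromy_def op_norm_op_prod[OF W(1)]
      by (simp_all add: a_def[abs_def] b_def[abs_def] c_def[abs_def] comp_def)
    then show ?thesis by simp
  qed
  also have "\<dots> = listprod (map (\<lambda>l. op_comp d W (op_comp d W (a l) (b l)) (c l)) [0..<length ps])"
    using W ps distinct
    by (intro listprod_interleave[symmetric]) (auto simp: a_def b_def c_def intro!: monodromy_factors_commute)
  finally show ?thesis
    by (simp add: a_def b_def c_def)
qed

section \<open>Trace reductions\<close>

lemma trace_red_eq_monodromy:
  "trace_red d S ps r X \<sigma> \<alpha> \<beta> = extend S (tr_space ps \<alpha> \<beta> - {(\<alpha>, \<beta>)})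
    (ptrace d (\<alpha>, \<beta>) (monodromy d (tr_space ps \<alpha> \<beta>) ps r X \<sigma> \<alpha> \<beta>))"
  by (simp add: trace_red_def monodromy_def Let_def)

lemma trace_red_product_eq_ptrace_on:
  assumes fin: "finite S"
    and distinct: "(\<alpha>1, \<beta>1) \<noteq> (\<alpha>2, \<beta>2)" "(\<alpha>1, \<beta>1) \<noteq> (\<alpha>3, \<beta>3)" "(\<alpha>2, \<beta>2) \<noteq> (\<alpha>3, \<beta>3)"
    and outside: "(\<alpha>1, \<beta>1) \<notin> S" "(\<alpha>2, \<beta>2) \<notin> S" "(\<alpha>3, \<beta>3) \<notin> S"
    and sub: "tr_space ps \<alpha>1 \<beta>1 \<subseteq> S \<union> {(\<alpha>1, \<beta>1)}" "tr_space ps \<alpha>2 \<beta>2 \<subseteq> S \<union> {(\<alpha>2, \<beta>2)}"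
      "tr_space ps \<alpha>3 \<beta>3 \<subseteq> S \<union> {(\<alpha>3, \<beta>3)}"
  defines "W \<equiv> S \<union> {(\<alpha>1, \<beta>1), (\<alpha>2, \<beta>2), (\<alpha>3, \<beta>3)}"
  shows "op_eq d S
    (op_prod d S [trace_red d S ps r X1 \<sigma>1 \<alpha>1 \<beta>1, trace_red d S ps r X2 \<sigma>2 \<alpha>2 \<beta>2,
                  trace_red d S ps r X3 \<sigma>3 \<alpha>3 \<beta>3])
    (ptrace_on d {(\<alpha>1, \<beta>1), (\<alpha>2, \<beta>2), (\<alpha>3, \<beta>3)}
      (op_comp d W (op_comp d W (monodromy d W ps r X1 \<sigma>1 \<alpha>1 \<beta>1) (monodromy d W ps r X2 \<sigma>2 \<alpha>2 \<beta>2))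
        (monodromy d W ps r X3 \<sigma>3 \<alpha>3 \<beta>3)))"
proof -
  let ?T1 = "tr_space ps \<alpha>1 \<beta>1" and ?T2 = "tr_space ps \<alpha>2 \<beta>2" and ?T3 = "tr_space ps \<alpha>3 \<beta>3"
  let ?P = "op_mult d W (extend W ?T1 (monodromy d ?T1 ps r X1 \<sigma>1 \<alpha>1 \<beta>1))
    (op_mult d W (extend W ?T2 (monodromy d ?T2 ps r X2 \<sigma>2 \<alpha>2 \<beta>2))
      (extend W ?T3 (monodromy d ?T3 ps r X3 \<sigma>3 \<alpha>3 \<beta>3)))"
  have "op_eq d S
      (op_prod d S [trace_red d S ps r X1 \<sigma>1 \<alpha>1 \<beta>1, trace_red d S ps r X2 \<sigma>2 \<alpha>2 \<beta>2,
                    trace_red d S ps r X3 \<sigma>3 \<alpha>3 \<beta>3])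
      (ptrace_on d {(\<alpha>1, \<beta>1), (\<alpha>2, \<beta>2), (\<alpha>3, \<beta>3)} ?P)"
    unfolding trace_red_eq_monodromy W_def
    by (rule op_eq_trans[OF op_prod_three[OF fin] ptrace_product_three[OF fin distinct outside]])
      (use sub in \<open>simp_all add: tr_space_def\<close>)
  also have "op_eq d S \<dots> (ptrace_on d {(\<alpha>1, \<beta>1), (\<alpha>2, \<beta>2), (\<alpha>3, \<beta>3)}
      (op_comp d W (op_comp d W (monodromy d W ps r X1 \<sigma>1 \<alpha>1 \<beta>1) (monodromy d W ps r X2 \<sigma>2 \<alpha>2 \<beta>2))
        (monodromy d W ps r X3 \<sigma>3 \<alpha>3 \<beta>3)))"
  proof -
    have "finite W" "?T1 \<subseteq> W" "?T2 \<subseteq> W" "?T3 \<subseteq> W"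
      using fin sub by (auto simp: W_def)
    then have "op_eq d W ?P (op_comp d W (op_comp d W (monodromy d W ps r X1 \<sigma>1 \<alpha>1 \<beta>1)
        (monodromy d W ps r X2 \<sigma>2 \<alpha>2 \<beta>2)) (monodromy d W ps r X3 \<sigma>3 \<alpha>3 \<beta>3))"
      by (intro op_eq_trans[OF _ op_eq_sym[OF op_comp_assoc_eq]] op_mult_cong monodromy_extend)
    then show ?thesis
      using outside unfolding W_def by (intro ptrace_on_cong) auto
  qed
  finally show ?thesis .
qed

lemma trace_red_products_eq_layers:
  fixes ps :: "nat list" and b c e :: nat
  defines "S \<equiv> yb_space ps b c e" and "W \<equiv> yb_space ps b c e \<union> {(b, c), (b, e), (c, e)}"
  assumes sorted: "sorted_wrt (<) ps" and below: "\<forall>p\<in>set ps. p < b" and order: "b < c" "c < e"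
  shows "op_eq d S
      (op_prod d S [trace_red d S ps r R \<sigma> b c, trace_red d S ps r R1 (col \<sigma> 1) b e,
                    trace_red d S ps r R2 \<sigma> c e])
      (ptrace_on d {(b, c), (b, e), (c, e)}
        (op_listprod d W (map (\<lambda>l. layer_lhs d W r R R1 R2 (col \<sigma> (Suc l)) (ps ! l) b c e)
          [0..<length ps])))" (is ?lhs)
    and "op_eq d S
      (op_prod d S [trace_red d S ps r R2 (col \<sigma> 1) c e, trace_red d S ps r R1 \<sigma> b e,
                    trace_red d S ps r R (col \<sigma> 1) b c])
      (ptrace_on d {(b, c), (b, e), (c, e)}
        (op_listprod d W (map (\<lambda>l. layer_rhs d W r R R1 R2 (col \<sigma> (Suc l)) (ps ! l) b c e)
          [0..<length ps])))" (is ?rhs)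
proof -
  have S: "finite S" "(b, c) \<notin> S" "(b, e) \<notin> S" "(c, e) \<notin> S"
    using below order by (auto simp: S_def yb_space_def)
  have tr: "tr_space ps b c \<subseteq> S \<union> {(b, c)}" "tr_space ps b e \<subseteq> S \<union> {(b, e)}"
    "tr_space ps c e \<subseteq> S \<union> {(c, e)}"
    by (auto simp: tr_space_def S_def yb_space_def)
  have W: "finite W" "tr_space ps b c \<subseteq> W" "tr_space ps b e \<subseteq> W" "tr_space ps c e \<subseteq> W"
    using S(1) tr by (auto simp: W_def S_def)
  have pairs: "(b, c) \<noteq> (b, e)" "(b, c) \<noteq> (c, e)" "(b, e) \<noteq> (c, e)"
    and pairs': "(c, e) \<noteq> (b, e)" "(c, e) \<noteq> (b, c)" "(b, e) \<noteq> (b, c)"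
    and ps: "\<forall>p\<in>set ps. p < b \<and> p < b \<and> p < c" "\<forall>p\<in>set ps. p < c \<and> p < b \<and> p < b"
    using below order by auto
  have sets: "S \<union> {(b, c), (b, e), (c, e)} = W" "S \<union> {(c, e), (b, e), (b, c)} = W"
    "{(c, e), (b, e), (b, c)} = {(b, c), (b, e), (c, e)}"
    by (auto simp: S_def W_def)
  show ?lhs
    using trace_red_product_eq_ptrace_on[OF S(1) pairs S(2-4) tr, of d r R \<sigma> R1 "col \<sigma> 1" R2 \<sigma>]
    unfolding sets monodromy_product_interleave[OF W sorted ps(1) pairs] by (simp add: layer_lhs_def)
  show ?rhs
    using trace_red_product_eq_ptrace_on[OF S(1) pairs' S(4,3,2) tr(3,2,1),
        of d r R2 "col \<sigma> 1" R1 \<sigma> R "col \<sigma> 1"]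
    unfolding sets monodromy_product_interleave[OF W(1,4,3,2) sorted ps(2) pairs']
    by (simp add: layer_rhs_def)
qed

lemma ptrace_on_layers_eq:
  fixes ps :: "nat list" and b c e :: nat
  defines "S \<equiv> yb_space ps b c e" and "Z \<equiv> {(b, c), (b, e), (c, e)}"
    and "W \<equiv> yb_space ps b c e \<union> {(b, c), (b, e), (c, e)}"
  assumes bte: "\<And>\<tau>. BTE d R R1 R2 R3 \<tau>" and inv: "invertible3 d (R3 (col \<sigma> 1) (r b) (r c) (r e))"
    and below: "\<forall>p\<in>set ps. p < b" and order: "b < c" "c < e" and even: "even (length ps)"
    and u: "valid d S u" and i: "valid d S i"
  shows "ptrace_on d Z (op_listprod d W
      (map (\<lambda>l. layer_lhs d W r R R1 R2 (col \<sigma> (Suc l)) (ps ! l) b c e) [0..<length ps])) u i =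
    ptrace_on d Z (op_listprod d W
      (map (\<lambda>l. layer_rhs d W r R R1 R2 (col \<sigma> (Suc l)) (ps ! l) b c e) [0..<length ps])) u i"
proof -
  have S: "finite S" "S \<inter> Z = {}" and W: "finite W" "W = S \<union> Z" "Z \<subseteq> W"
    using below order by (auto simp: S_def Z_def W_def yb_space_def)
  interpret monoid_on "op_comp d W" "op_one d W" "range (op_norm d W)"
    using W(1) by (rule monoid_on_op_comp)
  define q where "q j = op_norm d W (Xop W r R3 (col \<sigma> (Suc j)) b c e)" for j
  have step: "op_comp d W (layer_lhs d W r R R1 R2 (col \<sigma> (Suc j)) (ps ! j) b c e) (q (Suc j)) =
      op_comp d W (q j) (layer_rhs d W r R R1 R2 (col \<sigma> (Suc j)) (ps ! j) b c e)"
    if "j < length ps" for j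
  proof -
    have "ps ! j < b" "six_space (ps ! j) b c e \<subseteq> W"
      using that below by (auto simp: six_space_def W_def yb_space_def)
    from BTE_layer[OF bte[of "col \<sigma> (Suc j)"] this(1) order W(1) this(2), of r]
    show ?thesis by (simp add: q_def)
  qed
  obtain Y where inverse: "op_comp d W (q 0) (loc W (b, c) (b, e) (c, e) Y) = op_one d W"
    "op_comp d W (loc W (b, c) (b, e) (c, e) Y) (q 0) = op_one d W"
    using loc_inverse[OF W(1) _ _ _ W(3)[unfolded Z_def] inv] order unfolding q_def Xop_def by auto
  have "loc W (b, c) (b, e) (c, e) Y = extend (S \<union> Z) Z (loc Z (b, c) (b, e) (c, e) Y)"
    unfolding W(2) by (rule loc_eq_extend) (auto simp: Z_def)
  then have invariant: "ptrace_on d Z (op_comp d W x (loc W (b, c) (b, e) (c, e) Y)) u i =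
      ptrace_on d Z (op_comp d W (loc W (b, c) (b, e) (c, e) Y) x) u i" for x
    using ptrace_on_cyclic[OF S] u i unfolding W(2) op_eq_def by simp
  have closed_chain: "q (length ps) = q 0"
    using even by (simp add: q_def col_def)
  show ?thesis
    by (rule conj_invariant_telescope[where q = q and \<tau> = "\<lambda>F. ptrace_on d Z F u i"])
      (use step inverse invariant closed_chain in
        \<open>auto simp: q_def layer_lhs_def layer_rhs_def op_comp_def\<close>)
qed

theorem mainTheorem1:
  fixes d :: nat
    and R R1 R2 R3 :: "bool \<Rightarrow> 'c \<Rightarrow> 'c \<Rightarrow> 'c \<Rightarrow> mat3"
    and L :: nat and ps :: "nat list" and r :: "nat \<Rightarrow> 'c"
    and b c e :: nat and \<sigma> :: bool
  assumes bte: "\<And>\<tau>. BTE d R R1 R2 R3 \<tau>"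
    and inv: "\<And>\<tau> x y z. invertible3 d (R3 \<tau> x y z)"
    and L: "L \<ge> 1" and len: "length ps = 2 * L"
    and sorted: "sorted_wrt (<) ps"
    and below: "\<forall>p \<in> set ps. p < b"
    and bc: "b < c" and ce: "c < e"
  shows "let S = yb_space ps b c e in
    op_eq d S
      (op_prod d S [trace_red d S ps r R \<sigma> b c, trace_red d S ps r R1 (col \<sigma> 1) b e,
                    trace_red d S ps r R2 \<sigma> c e])
      (op_prod d S [trace_red d S ps r R2 (col \<sigma> 1) c e, trace_red d S ps r R1 \<sigma> b e,
                    trace_red d S ps r R (col \<sigma> 1) b c])"
proof -
  \<comment> \<open>only the parity of the number of planes matters\<close>
  have "even (length ps)"
    using len by simp
  note layers = ptrace_on_layers_eq[OF bte inv below bc ce this]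
  note products = trace_red_products_eq_layers[OF sorted below bc ce]
  show ?thesis
    unfolding Let_def
    by (rule op_eq_trans[OF products(1) op_eq_trans[OF _ op_eq_sym[OF products(2)]]])
      (unfold op_eq_def, intro allI impI, rule layers)
qed

end
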